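(* For every $G\in C^2(\mathbb{R})$ there is a separately convex function $F:\mathbb{R}^2\to\mathbb{R}$ such that $F(t,t)=G(t)$ for each $t\in\mathbb{R}$.
   Context: A function $F:\mathbb{R}^2\to\mathbb{R}$ is called separately convex if it is convex on every line parallel to a coordinate axis. *)

theory Defs
  imports "HOL-Analysis.Analysis"
begin

definition C2 :: "(real \<Rightarrow> real) \<Rightarrow> bool" where
  "C2 G \<longleftrightarrow> (\<exists>G' G''. (\<forall>t. (G has_real_derivative G' t) (at t)) \<and>
                      (\<forall>t. (G' has_real_derivative G'' t) (at t)) \<and>
                      continuous_on UNIV G'')"

definition separately_convex :: "(real \<times> real \<Rightarrow> real) \<Rightarrow> bool" where
  "separately_convex F \<longleftrightarrow>
     (\<forall>y. convex_on UNIV (\<lambda>x. F (x, y))) \<and> (\<forall>x. convex_on UNIV (\<lambda>y. F (x, y)))"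

end

theory Submission
  imports Defs
begin

text \<open>
  Let \<open>H = tangent_glue g g'\<close>, i.e. for \<open>x \<le> y\<close> the value of \<open>g\<close> at \<open>x\<close>
  plus its tangent at \<open>x\<close> evaluated at \<open>y\<close>. If \<open>g''\<close> is nondecreasing, \<open>H\<close> is convex in each
  variable, and so is \<open>H(-x, -y)\<close>; both equal \<open>2 g t\<close> on the diagonal. Choose \<open>g'' = p\<close>
  continuous and nondecreasing with \<open>p t + p (-t) \<le> -\<bar>G'' t\<bar>\<close>, e.g.
  \<open>p t = - max {\<bar>G'' u\<bar> | \<bar>u\<bar> \<le> \<bar>min t 0\<bar>}\<close>. Then \<open>s t = G t / 2 - g t - g (-t)\<close> has \<open>s'' \<ge> 0\<close>, and
  \<open>F(x, y) = s x + s y + H(x, y) + H(-x, -y)\<close> is separately convex with \<open>F(t, t) = G t\<close>.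
\<close>

lemma real_antiderivative_exists:
  fixes f :: "real \<Rightarrow> real"
  assumes "continuous_on UNIV f"
  obtains F where "\<And>x. (F has_real_derivative f x) (at x)"
proof -
  from einterval_antiderivative[of "-\<infinity>" "\<infinity>" f] assms
  obtain F where "\<forall>x. (F has_vector_derivative f x) (at x)"
    by (auto simp: continuous_on_eq_continuous_at)
  with that show ?thesis by (auto simp: has_real_derivative_iff_has_vector_derivative)
qed

lemma increment_ge_of_deriv_ge:
  fixes f f' :: "real \<Rightarrow> real"
  assumes "a \<le> b"
    and "\<And>t. a \<le> t \<Longrightarrow> t \<le> b \<Longrightarrow> (f has_real_derivative f' t) (at t)"
    and "\<And>t. a \<le> t \<Longrightarrow> t \<le> b \<Longrightarrow> m \<le> f' t"
  shows "m * (b - a) \<le> f b - f a"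
proof (cases "a = b")
  case False
  with assms obtain z where "a < z" "z < b" "f b - f a = (b - a) * f' z"
    using MVT2[of a b f f'] by auto
  with assms show ?thesis by (simp add: mult.commute mult_right_mono)
qed simp

lemma convex_on_second_deriv_nonneg:
  fixes f f' f'' :: "real \<Rightarrow> real"
  assumes "\<And>x. (f has_real_derivative f' x) (at x)"
    and "\<And>x. (f' has_real_derivative f'' x) (at x)"
    and "\<And>x. f'' x \<ge> 0"
  shows "convex_on UNIV f"
  by (rule convex_on_realI[OF connected_UNIV assms(1)])
     (use assms(2,3) in \<open>blast intro: DERIV_nonneg_imp_nondecreasing\<close>)

lemma convex_on_reflect:
  fixes f :: "real \<Rightarrow> real"
  assumes "convex_on UNIV f"
  shows "convex_on UNIV (\<lambda>x. f (- x))"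
proof (rule convex_onI)
  fix t x y :: real assume "0 < t" "t < 1"
  then have "f ((1 - t) * - x + t * - y) \<le> (1 - t) * f (- x) + t * f (- y)"
    using convex_onD[OF assms, of t "-x" "-y"] by simp
  then show "f (- ((1 - t) *\<^sub>R x + t *\<^sub>R y)) \<le> (1 - t) * f (- x) + t * f (- y)"
    by (simp add: algebra_simps)
qed simp

definition sym_running_max :: "(real \<Rightarrow> real) \<Rightarrow> real \<Rightarrow> real" where
  "sym_running_max k r = Sup (k ` {-\<bar>r\<bar>..\<bar>r\<bar>})"

lemma sym_running_max_upper:
  assumes "continuous_on UNIV k" "\<bar>s\<bar> \<le> \<bar>r\<bar>"
  shows "k s \<le> sym_running_max k r"
  unfolding sym_running_max_def
proof (rule cSup_upper)
  show "k s \<in> k ` {-\<bar>r\<bar>..\<bar>r\<bar>}"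
    using assms(2) by (auto simp: abs_le_iff)
  have "compact (k ` {-\<bar>r\<bar>..\<bar>r\<bar>})"
    by (rule compact_continuous_image) (auto intro: continuous_on_subset[OF assms(1)])
  then show "bdd_above (k ` {-\<bar>r\<bar>..\<bar>r\<bar>})"
    by (intro bounded_imp_bdd_above compact_imp_bounded)
qed

lemma sym_running_max_least:
  assumes "\<And>s. \<bar>s\<bar> \<le> \<bar>r\<bar> \<Longrightarrow> k s \<le> B"
  shows "sym_running_max k r \<le> B"
  unfolding sym_running_max_def by (rule cSup_least) (use assms in auto)

lemma sym_running_max_mono:
  assumes "continuous_on UNIV k" "\<bar>r\<bar> \<le> \<bar>r'\<bar>"
  shows "sym_running_max k r \<le> sym_running_max k r'"
  by (rule sym_running_max_least) (use assms in \<open>auto intro!: sym_running_max_upper\<close>)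

text \<open>Clipping a point of one interval into the other moves it by at most \<open>\<bar>\<bar>r\<bar> - \<bar>r'\<bar>\<bar>\<close>.\<close>
lemma sym_running_max_le_shift:
  assumes cont: "continuous_on UNIV k"
    and modulus: "\<And>s s'. \<bar>s\<bar> \<le> R \<Longrightarrow> \<bar>s'\<bar> \<le> R \<Longrightarrow> \<bar>s - s'\<bar> < \<delta> \<Longrightarrow> k s < k s' + \<epsilon>"
    and "\<bar>r\<bar> \<le> R" "\<bar>r'\<bar> \<le> R" "\<bar>\<bar>r\<bar> - \<bar>r'\<bar>\<bar> < \<delta>"
  shows "sym_running_max k r \<le> sym_running_max k r' + \<epsilon>"
proof (rule sym_running_max_least)
  fix s assume s: "\<bar>s\<bar> \<le> \<bar>r\<bar>"
  define s' where "s' = max (-\<bar>r'\<bar>) (min \<bar>r'\<bar> s)"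
  have "\<bar>s'\<bar> \<le> \<bar>r'\<bar>" "\<bar>s - s'\<bar> < \<delta>"
    using s assms(5) by (auto simp: s'_def abs_le_iff abs_less_iff max_def min_def)
  then have "k s < k s' + \<epsilon>"
    using s assms(3,4) by (intro modulus) auto
  also have "k s' \<le> sym_running_max k r'"
    by (rule sym_running_max_upper[OF cont \<open>\<bar>s'\<bar> \<le> \<bar>r'\<bar>\<close>])
  finally show "k s \<le> sym_running_max k r' + \<epsilon>" by simp
qed

lemma continuous_on_sym_running_max:
  assumes cont: "continuous_on UNIV k"
  shows "continuous_on UNIV (sym_running_max k)"
  unfolding continuous_on_eq_continuous_at[OF open_UNIV] continuous_at_eps_delta
proof (intro ballI allI impI)
  fix r0 \<epsilon> :: real assume "\<epsilon> > 0"
  define R where "R = \<bar>r0\<bar> + 1"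
  have "uniformly_continuous_on {-R..R} k"
    by (rule compact_uniformly_continuous) (auto intro: continuous_on_subset[OF cont])
  then obtain \<delta> where "\<delta> > 0"
    and \<delta>: "\<And>s s'. s \<in> {-R..R} \<Longrightarrow> s' \<in> {-R..R} \<Longrightarrow> dist s' s < \<delta> \<Longrightarrow> dist (k s') (k s) < \<epsilon>/2"
    using \<open>\<epsilon> > 0\<close> unfolding uniformly_continuous_on_def by (meson half_gt_zero)
  have modulus: "k s < k s' + \<epsilon>/2"
    if "\<bar>s\<bar> \<le> R" "\<bar>s'\<bar> \<le> R" "\<bar>s - s'\<bar> < \<delta>" for s s'
    using \<delta>[of s' s] that unfolding dist_real_def abs_le_iff abs_less_iff by auto
  show "\<exists>d>0. \<forall>r. dist r r0 < d \<longrightarrow> dist (sym_running_max k r) (sym_running_max k r0) < \<epsilon>"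
  proof (intro exI[of _ "min 1 \<delta>"] conjI allI impI)
    fix r assume "dist r r0 < min 1 \<delta>"
    then have "\<bar>r\<bar> \<le> R" "\<bar>r0\<bar> \<le> R" "\<bar>\<bar>r\<bar> - \<bar>r0\<bar>\<bar> < \<delta>" "\<bar>\<bar>r0\<bar> - \<bar>r\<bar>\<bar> < \<delta>"
      by (auto simp: R_def dist_real_def)
    then have "sym_running_max k r \<le> sym_running_max k r0 + \<epsilon>/2"
      and "sym_running_max k r0 \<le> sym_running_max k r + \<epsilon>/2"
      by (auto intro!: sym_running_max_le_shift[OF cont modulus])
    then show "dist (sym_running_max k r) (sym_running_max k r0) < \<epsilon>"
      using \<open>\<epsilon> > 0\<close> by (simp add: dist_real_def)
  qed (use \<open>\<delta> > 0\<close> in simp)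
qed

definition tangent_glue :: "(real \<Rightarrow> real) \<Rightarrow> (real \<Rightarrow> real) \<Rightarrow> real \<Rightarrow> real \<Rightarrow> real" where
  "tangent_glue g c x y = 2 * g (min x y) + c (min x y) * \<bar>x - y\<bar>"

lemma tangent_glue_commute: "tangent_glue g c x y = tangent_glue g c y x"
  by (simp add: tangent_glue_def min.commute abs_minus_commute)

lemma tangent_glue_diag [simp]: "tangent_glue g c t t = 2 * g t"
  by (simp add: tangent_glue_def)

lemma convex_on_tangent_glue:
  fixes g c p :: "real \<Rightarrow> real"
  assumes dg: "\<And>t. (g has_real_derivative c t) (at t)"
    and dc: "\<And>t. (c has_real_derivative p t) (at t)"
    and "mono p"
  shows "convex_on UNIV (\<lambda>x. tangent_glue g c x y)"
proof -
  define g\<^sub>L where "g\<^sub>L x = 2 * g x + c x * (y - x)" for x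
  define g\<^sub>R where "g\<^sub>R x = 2 * g y + c y * (x - y)" for x
  define d\<^sub>L where "d\<^sub>L x = c x + p x * (y - x)" for x
  have glue: "tangent_glue g c x y = (if x \<in> {..y} then g\<^sub>L x else g\<^sub>R x)" for x
    by (simp add: tangent_glue_def g\<^sub>L_def g\<^sub>R_def min_def abs_if)
  have tangent_below: "p a * (b - a) \<le> c b - c a" if "a \<le> b" for a b
    using that dc monoD[OF \<open>mono p\<close>] by (intro increment_ge_of_deriv_ge) auto
  show ?thesis
    unfolding glue
  proof (rule convex_on_realI[where f' = "\<lambda>x. if x \<in> {..y} then d\<^sub>L x else c y"])
    fix x :: real
    have "((\<lambda>x. if x \<in> {..y} then g\<^sub>L x else g\<^sub>R x) has_vector_derivative
           (if x \<in> {..y} then d\<^sub>L x else c y)) (at x within UNIV)"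
    proof (rule has_vector_derivative_If_within_closures[where T = "{y<..}"])
      have "(g\<^sub>L has_real_derivative d\<^sub>L x) (at x)"
        unfolding g\<^sub>L_def d\<^sub>L_def
        by (rule derivative_eq_intros dg dc refl | simp add: algebra_simps)+
      then show "(g\<^sub>L has_vector_derivative d\<^sub>L x) (at x within {..y} \<union> (closure {..y} \<inter> closure {y<..}))"
        by (auto simp: has_real_derivative_iff_has_vector_derivative intro: has_vector_derivative_at_within)
      have "(g\<^sub>R has_real_derivative c y) (at x)"
        unfolding g\<^sub>R_def by (rule derivative_eq_intros refl | simp)+
      then show "(g\<^sub>R has_vector_derivative c y) (at x within {y<..} \<union> (closure {..y} \<inter> closure {y<..}))"
        by (auto simp: has_real_derivative_iff_has_vector_derivative intro: has_vector_derivative_at_within)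
    qed (auto simp: g\<^sub>L_def g\<^sub>R_def d\<^sub>L_def)
    then show "((\<lambda>x. if x \<in> {..y} then g\<^sub>L x else g\<^sub>R x) has_real_derivative
           (if x \<in> {..y} then d\<^sub>L x else c y)) (at x)"
      by (simp add: has_real_derivative_iff_has_vector_derivative)
  next
    fix x x' :: real assume "x \<le> x'"
    have "d\<^sub>L x \<le> d\<^sub>L x'" if "x' \<le> y"
    proof -
      have "0 \<le> (p x' - p x) * (y - x')"
        using monoD[OF \<open>mono p\<close> \<open>x \<le> x'\<close>] that by simp
      then show ?thesis
        using tangent_below[OF \<open>x \<le> x'\<close>] by (simp add: d\<^sub>L_def algebra_simps)
    qed
    moreover have "d\<^sub>L x \<le> c y" if "x \<le> y"
      using tangent_below[OF that] by (simp add: d\<^sub>L_def)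
    ultimately show "(if x \<in> {..y} then d\<^sub>L x else c y) \<le> (if x' \<in> {..y} then d\<^sub>L x' else c y)"
      using \<open>x \<le> x'\<close> by auto
  qed simp
qed

lemma reflected_running_max_profile:
  fixes k :: "real \<Rightarrow> real"
  assumes cont: "continuous_on UNIV k"
  obtains p where "continuous_on UNIV p" "mono p" "\<And>t. p t + p (- t) \<le> - \<bar>k t\<bar>"
proof
  define m where "m = sym_running_max (\<lambda>t. \<bar>k t\<bar>)"
  have cont_abs: "continuous_on UNIV (\<lambda>t. \<bar>k t\<bar>)"
    by (intro continuous_intros cont)
  show "continuous_on UNIV (\<lambda>t. - m (min t 0))"
    unfolding m_def
    by (intro continuous_intros continuous_on_compose2[OF continuous_on_sym_running_max[OF cont_abs]]) auto
  show "mono (\<lambda>t. - m (min t 0))"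
    by (auto intro!: monoI sym_running_max_mono[OF cont_abs] simp: m_def)
  fix t
  have "0 \<le> m r" for r
    using sym_running_max_upper[OF cont_abs, of 0 r] abs_ge_zero[of "k 0"] unfolding m_def by linarith
  moreover have "\<bar>k t\<bar> \<le> m (min t 0) \<or> \<bar>k t\<bar> \<le> m (min (- t) 0)"
    by (cases "t \<le> 0") (auto intro!: sym_running_max_upper[OF cont_abs] simp: m_def)
  ultimately show "- m (min t 0) + - m (min (- t) 0) \<le> - \<bar>k t\<bar>"
    by (smt (verit))
qed

lemma separately_convex_symmetricI:
  assumes "\<And>x y. F (x, y) = F (y, x)" and "\<And>y. convex_on UNIV (\<lambda>x. F (x, y))"
  shows "separately_convex F"
  using assms unfolding separately_convex_def by presburger

lemma separately_convex_tangent_glue_sum: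
  fixes g c p s :: "real \<Rightarrow> real"
  assumes dg: "\<And>t. (g has_real_derivative c t) (at t)"
    and dc: "\<And>t. (c has_real_derivative p t) (at t)"
    and "mono p" and "convex_on UNIV s"
  shows "separately_convex (\<lambda>(x, y). s x + s y + tangent_glue g c x y + tangent_glue g c (- x) (- y))"
proof (rule separately_convex_symmetricI)
  have glue: "convex_on UNIV (\<lambda>x. tangent_glue g c x y)" for y
    by (rule convex_on_tangent_glue[OF dg dc \<open>mono p\<close>])
  show "convex_on UNIV (\<lambda>x. case (x, y) of (x, y) \<Rightarrow>
          s x + s y + tangent_glue g c x y + tangent_glue g c (- x) (- y))" for y
    by (simp, intro convex_on_add \<open>convex_on UNIV s\<close> convex_on_const[THEN iffD2] convex_UNIV
        glue convex_on_reflect[OF glue])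
qed (simp add: tangent_glue_commute)

theorem lemma5p5:
  fixes G :: "real \<Rightarrow> real"
  assumes "C2 G"
  shows "\<exists>F :: real \<times> real \<Rightarrow> real. separately_convex F \<and> (\<forall>t. F (t, t) = G t)"
proof -
  obtain G' G'' where dG: "\<And>t. (G has_real_derivative G' t) (at t)"
    and dG': "\<And>t. (G' has_real_derivative G'' t) (at t)" and "continuous_on UNIV G''"
    using assms unfolding C2_def by blast
  then obtain p where "continuous_on UNIV p" "mono p" and p: "\<And>t. p t + p (- t) \<le> - \<bar>G'' t\<bar>"
    using reflected_running_max_profile by blast
  then obtain c where dc: "\<And>t. (c has_real_derivative p t) (at t)"
    using real_antiderivative_exists by blast
  then obtain g where dg: "\<And>t. (g has_real_derivative c t) (at t)"
    using real_antiderivative_exists[of c] by (meson DERIV_continuous_on)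
  define s where "s t = G t / 2 - g t - g (- t)" for t
  have "convex_on UNIV s"
  proof (rule convex_on_second_deriv_nonneg)
    have "((\<lambda>t. g (- t)) has_real_derivative - c (- t)) (at t)" for t
      using DERIV_mirror[where f = g and x = t] dg by blast
    then show "(s has_real_derivative G' t / 2 - c t + c (- t)) (at t)" for t
      unfolding s_def by (auto intro!: derivative_eq_intros dG dg)
    have "((\<lambda>t. c (- t)) has_real_derivative - p (- t)) (at t)" for t
      using DERIV_mirror[where f = c and x = t] dc by blast
    then show "((\<lambda>t. G' t / 2 - c t + c (- t)) has_real_derivative G'' t / 2 - p t - p (- t)) (at t)" for t
      by (auto intro!: derivative_eq_intros dG' dc)
    show "0 \<le> G'' t / 2 - p t - p (- t)" for t
      using p[of t] by linarith
  qed
  then have "separately_convex (\<lambda>(x, y). s x + s y + tangent_glue g c x y + tangent_glue g c (- x) (- y))"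
    by (rule separately_convex_tangent_glue_sum[OF dg dc \<open>mono p\<close>])
  then show ?thesis
    by (intro exI[of _ "\<lambda>(x, y). s x + s y + tangent_glue g c x y + tangent_glue g c (- x) (- y)"])
       (simp add: s_def)
qed

end
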